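(* Let $A$ be the $8\times 8$ adjacency matrix of Ashley's graph, the directed graph on vertices $v_1,\dots,v_8$ with exactly the following 16 edges: $v_1\to v_1$, $v_1\to v_3$, $v_2\to v_2$, $v_2\to v_1$, $v_3\to v_5$, $v_3\to v_6$, $v_4\to v_2$, $v_4\to v_8$, $v_5\to v_7$, $v_5\to v_4$, $v_6\to v_4$, $v_6\to v_5$, $v_7\to v_8$, $v_7\to v_3$, $v_8\to v_6$, $v_8\to v_7$. Then $A$ is unitally shift equivalent to the $1\times1$ matrix $(2)$.
   Context: Two square $\mathbb{N}$-matrices $A,B$ are shift equivalent if there are an integer $\ell\ge1$ and rectangular $\mathbb{N}$-matrices $R,S$ with $A^\ell=RS$, $B^\ell=SR$, $AR=RB$, $BS=SA$. Such a shift equivalence $(R,S)$ is unital if there are $m,k\in\mathbb{N}$ with $(B^t)^mR^t\underline{1}=(B^t)^{m+k}\underline{1}$, where $\underline1$ is the all-ones column vector. $A$ and $B$ are unitally shift equivalent if a unital shift equivalence from $A$ to $B$ exists. *)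

theory Defs
  imports "Jordan_Normal_Form.Matrix"
begin

definition shift_equivalence :: "nat mat \<Rightarrow> nat mat \<Rightarrow> nat \<Rightarrow> nat mat \<Rightarrow> nat mat \<Rightarrow> bool" where
  "shift_equivalence A B l R S \<longleftrightarrow>
     (\<exists>n p. A \<in> carrier_mat n n \<and> B \<in> carrier_mat p p \<and>
            R \<in> carrier_mat n p \<and> S \<in> carrier_mat p n \<and>
            l \<ge> 1 \<and> A ^\<^sub>m l = R * S \<and> B ^\<^sub>m l = S * R \<and>
            A * R = R * B \<and> B * S = S * A)"

definition ones_vec :: "nat \<Rightarrow> nat vec" where
  "ones_vec n = vec n (\<lambda>_. 1)"

definition unital_shift_equivalence :: "nat mat \<Rightarrow> nat mat \<Rightarrow> nat \<Rightarrow> nat mat \<Rightarrow> nat mat \<Rightarrow> bool" where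
  "unital_shift_equivalence A B l R S \<longleftrightarrow>
     shift_equivalence A B l R S \<and>
     (\<exists>m k. ((transpose_mat B) ^\<^sub>m m) *\<^sub>v ((transpose_mat R) *\<^sub>v ones_vec (dim_row R))
            = ((transpose_mat B) ^\<^sub>m (m + k)) *\<^sub>v ones_vec (dim_row B))"

definition unitally_shift_equivalent :: "nat mat \<Rightarrow> nat mat \<Rightarrow> bool" where
  "unitally_shift_equivalent A B \<longleftrightarrow> (\<exists>l R S. unital_shift_equivalence A B l R S)"

text \<open>Ashley's graph: vertices v_1..v_8 are indices 0..7; edge v_i -> v_j is the pair (i-1, j-1).\<close>

definition ashley_edges :: "(nat \<times> nat) set" where
  "ashley_edges = {(0,0), (0,2), (1,1), (1,0), (2,4), (2,5), (3,1), (3,7),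
                   (4,6), (4,3), (5,3), (5,4), (6,7), (6,2), (7,5), (7,6)}"

definition ashley_matrix :: "nat mat" where
  "ashley_matrix = mat 8 8 (\<lambda>(i, j). if (i, j) \<in> ashley_edges then 1 else 0)"

end

theory Submission
  imports Defs "Jordan_Normal_Form.Matrix_IArray_Impl"
begin

text \<open>Ashley's graph is 2-in, 2-out regular and its adjacency matrix A satisfies A^6 = 8J, J the
  all-ones matrix. For any such d-regular matrix with A^l = cJ, the all-ones column R and the
  constant row S = (c \<dots> c) form a shift equivalence of lag l to the 1\<times>1 matrix (d): regularity
  gives AR = dR and SA = dS, while RS = cJ and SR = (nc) = (d^l). Unitality asks that the
  vertex count n = 8 be a power of d = 2.\<close>

lemma power_mat_1x1:
  "mat 1 1 (\<lambda>_. d) ^\<^sub>m l = mat 1 1 (\<lambda>_. (d::'a::comm_semiring_1) ^ l)"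
proof (induction l)
  case (Suc l)
  then show ?case
    by (intro eq_matI) (auto simp: scalar_prod_def mult.commute)
qed (auto intro: eq_matI)

lemma regular_unitally_shift_equivalent:
  fixes A :: "nat mat"
  assumes A: "A \<in> carrier_mat n n"
    and row_sums: "A * mat n 1 (\<lambda>_. 1) = d \<cdot>\<^sub>m mat n 1 (\<lambda>_. 1)"
    and col_sums: "mat 1 n (\<lambda>_. 1) * A = d \<cdot>\<^sub>m mat 1 n (\<lambda>_. 1)"
    and power: "A ^\<^sub>m l = mat n n (\<lambda>_. c)" and lag: "l \<ge> 1"
    and count: "n * c = d ^ l"
    and unital: "n = d ^ k"
  shows "unitally_shift_equivalent A (mat 1 1 (\<lambda>_. d))"
proof -
  define B where "B = mat 1 1 (\<lambda>_. d)"
  define R where "R = mat n 1 (\<lambda>_. 1 :: nat)"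
  define S where "S = mat 1 n (\<lambda>_. c)"
  have B_symmetric: "transpose_mat B = B"
    unfolding B_def by (intro eq_matI) auto
  have "S = c \<cdot>\<^sub>m mat 1 n (\<lambda>_. 1)"
    unfolding S_def by (intro eq_matI) auto
  then have "S * A = c \<cdot>\<^sub>m (d \<cdot>\<^sub>m mat 1 n (\<lambda>_. 1))"
    using col_sums by (simp add: mult_smult_assoc_mat[OF mat_carrier A])
  then have SA: "S * A = mat 1 n (\<lambda>_. c * d)"
    by (auto intro!: eq_matI)
  have "A ^\<^sub>m l = R * S"
    unfolding power R_def S_def by (intro eq_matI) (auto simp: scalar_prod_def)
  moreover have "B ^\<^sub>m l = S * R"
    unfolding B_def R_def S_def power_mat_1x1 using count
    by (intro eq_matI) (auto simp: scalar_prod_def)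
  moreover have "A * R = R * B"
    unfolding row_sums R_def B_def by (intro eq_matI) (auto simp: scalar_prod_def)
  moreover have "B * S = S * A"
    unfolding SA unfolding B_def S_def by (intro eq_matI) (auto simp: scalar_prod_def)
  moreover have "(transpose_mat B) ^\<^sub>m 0 *\<^sub>v (transpose_mat R *\<^sub>v ones_vec (dim_row R))
      = (transpose_mat B) ^\<^sub>m (0 + k) *\<^sub>v ones_vec (dim_row B)"
    unfolding B_symmetric unfolding B_def R_def ones_vec_def power_mat_1x1 unital
    by (intro eq_vecI) (auto simp: scalar_prod_def)
  moreover have "B \<in> carrier_mat 1 1" "R \<in> carrier_mat n 1" "S \<in> carrier_mat 1 n"
    by (simp_all add: B_def R_def S_def)
  ultimately have "unital_shift_equivalence A B l R S"
    unfolding unital_shift_equivalence_def shift_equivalence_def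
    using A lag by blast
  then show ?thesis
    unfolding unitally_shift_equivalent_def B_def by blast
qed

lemma ashley_matrix_carrier: "ashley_matrix \<in> carrier_mat 8 8"
  by (simp add: ashley_matrix_def)

lemma ashley_matrix_row_sums:
  "ashley_matrix * mat 8 1 (\<lambda>_. 1) = 2 \<cdot>\<^sub>m mat 8 1 (\<lambda>_. 1)"
  unfolding ashley_matrix_def ashley_edges_def by code_simp

lemma ashley_matrix_col_sums:
  "mat 1 8 (\<lambda>_. 1) * ashley_matrix = 2 \<cdot>\<^sub>m mat 1 8 (\<lambda>_. 1)"
  unfolding ashley_matrix_def ashley_edges_def by code_simp

lemma ashley_matrix_power_6: "ashley_matrix ^\<^sub>m 6 = mat 8 8 (\<lambda>_. 8)"
  unfolding ashley_matrix_def ashley_edges_def by code_simp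

theorem mainTheorem11:
  shows "unitally_shift_equivalent ashley_matrix (mat 1 1 (\<lambda>_. 2))"
  by (rule regular_unitally_shift_equivalent[where k = 3, OF ashley_matrix_carrier
        ashley_matrix_row_sums ashley_matrix_col_sums ashley_matrix_power_6]) simp_all

end
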